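(* Let $\mathbf{M}\in\mathbb{R}^{n\times n}$ be symmetric positive definite, let $V=\{1,\dots,n\}$, and let $P(V)$ be a partition of $V$ into disjoint nonempty blocks. Fix a block $B\in P(V)$. Let $N_1,\dots,N_g\in P(V)\setminus\{B\}$ be the blocks $D$ with $\mathbf{M}_{BD}\neq 0$, put $N=N_1\cup\dots\cup N_g$, and let $W=V\setminus(B\cup N)$ (so $\mathbf{M}_{BW}=0$). Let $\mathbf{\Pi}\in\mathbb{R}^{n\times \pi}$ be any matrix. Let $\mathbf{M}_{BB}=\mathbf{L}\mathbf{L}^T$ be the Cholesky factorization, set $\widehat{\mathbf{M}}_{BN_j}=\mathbf{L}^{-1}\mathbf{M}_{BN_j}$, $\widehat{\mathbf{M}}_{BN}=\mathbf{L}^{-1}\mathbf{M}_{BN}$, $\widehat{\mathbf{M}}_{NB}=\widehat{\mathbf{M}}_{BN}^T$, $\mathbf{\Phi}_B=\mathbf{\Pi}(B,:)$, $\mathbf{\Phi}_{N_j}=\mathbf{\Pi}(N_j,:)$, and define the $|B|\times (g+1)\pi$ matrix $$\mathbf{N}=\begin{pmatrix}\mathbf{L}^T\mathbf{\Phi}_B & \widehat{\mathbf{M}}_{BN_1}\mathbf{\Phi}_{N_1} & \cdots & \widehat{\mathbf{M}}_{BN_g}\mathbf{\Phi}_{N_g}\end{pmatrix}.$$ Let $\mathbf{Q}=(\mathbf{Q}_1\ \mathbf{Q}_2)$ be an orthogonal $|B|\times|B|$ matrix whose first block of columns $\mathbf{Q}_1$ is an orthonormal basis of the range of $\mathbf{N}$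 (and $\mathbf{Q}_2$ an orthonormal basis of its orthogonal complement). With the variables ordered as $(B,N,W)$ and the $B$-block further split according to $(\mathbf{Q}_1,\mathbf{Q}_2)$, define $$\mathbf{\mathcal{B}}=\begin{pmatrix}\mathbf{L}\mathbf{Q} & \\ & \mathbf{I}\end{pmatrix},\qquad \mathbf{M}_{(+)}=\begin{pmatrix}\mathbf{I} & 0 & \mathbf{Q}_1^T\widehat{\mathbf{M}}_{BN} & 0\\ 0 & \mathbf{I} & 0 & 0\\ \widehat{\mathbf{M}}_{NB}\mathbf{Q}_1 & 0 & \mathbf{M}_{NN} & \mathbf{M}_{NW}\\ 0 & 0 & \mathbf{M}_{WN} & \mathbf{M}_{WW}\end{pmatrix},\qquad \widetilde{\mathbf{M}}=\mathbf{\mathcal{B}}\,\mathbf{M}_{(+)}\,\mathbf{\mathcal{B}}^T.$$ Then for every block $D\in P(V)$ we have $\mathbf{M}\mathbf{\Pi}_D=\widetilde{\mathbf{M}}\mathbf{\Pi}_D$, where $\mathbf{\Pi}_D\in\mathbb{R}^{n\times\pi}$ is defined by $(\mathbf{\Pi}_D)_{ij}=\mathbf{\Pi}_{ij}$ if $i\in D$ and $0$ otherwise. Moreover, $\widetilde{\mathbf{M}}$ is symmetric positive definite.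
   Context: In the application, the columns of $\mathbf{\Pi}$ are discretized polynomials of the grid coordinates (e.g. $\mathbf{\Pi}=\mathbf{\Pi}^0$ the all-ones vector, or $\mathbf{\Pi}^1$ with rows $(1,x_i,y_i,z_i)$), but the statement holds for any $\mathbf{\Pi}$. For index sets $S,T$, $\mathbf{M}_{ST}$ denotes the submatrix of $\mathbf{M}$ with rows in $S$ and columns in $T$, and $\mathbf{\Pi}(S,:)$ the rows of $\mathbf{\Pi}$ indexed by $S$. *)

theory Defs
  imports Complex_Main
begin

text \<open>Matrices are represented as functions nat \<Rightarrow> nat \<Rightarrow> real; an n\<times>n matrix is
  the restriction to V = {0..<n}. Submatrices M_ST are the restrictions to S \<times> T.\<close>

definition partition_of :: "nat set \<Rightarrow> nat set set \<Rightarrow> bool" where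
  "partition_of V P \<longleftrightarrow> (\<forall>D\<in>P. D \<noteq> {} \<and> D \<subseteq> V) \<and>
     (\<forall>D\<in>P. \<forall>E\<in>P. D \<noteq> E \<longrightarrow> D \<inter> E = {}) \<and> \<Union>P = V"

definition symmetric_on :: "nat set \<Rightarrow> (nat \<Rightarrow> nat \<Rightarrow> real) \<Rightarrow> bool" where
  "symmetric_on V A \<longleftrightarrow> (\<forall>i\<in>V. \<forall>j\<in>V. A i j = A j i)"

definition spd_on :: "nat set \<Rightarrow> (nat \<Rightarrow> nat \<Rightarrow> real) \<Rightarrow> bool" where
  "spd_on V A \<longleftrightarrow> symmetric_on V A \<and>
     (\<forall>x. (\<exists>i\<in>V. x i \<noteq> 0) \<longrightarrow> (\<Sum>i\<in>V. \<Sum>j\<in>V. x i * A i j * x j) > 0)"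

definition in_range :: "'r set \<Rightarrow> 'c set \<Rightarrow> ('r \<Rightarrow> 'c \<Rightarrow> real) \<Rightarrow> ('r \<Rightarrow> real) \<Rightarrow> bool" where
  "in_range R C A v \<longleftrightarrow> (\<exists>x. \<forall>i\<in>R. v i = (\<Sum>j\<in>C. A i j * x j))"

definition nbr_blocks :: "nat set set \<Rightarrow> nat set \<Rightarrow> (nat \<Rightarrow> nat \<Rightarrow> real) \<Rightarrow> nat set set" where
  "nbr_blocks P B M = {D\<in>P. D \<noteq> B \<and> (\<exists>i\<in>B. \<exists>j\<in>D. M i j \<noteq> 0)}"

definition nbr_set :: "nat set set \<Rightarrow> nat set \<Rightarrow> (nat \<Rightarrow> nat \<Rightarrow> real) \<Rightarrow> nat set" where
  "nbr_set P B M = \<Union>(nbr_blocks P B M)"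

definition Mhat :: "nat set \<Rightarrow> (nat \<Rightarrow> nat \<Rightarrow> real) \<Rightarrow> (nat \<Rightarrow> nat \<Rightarrow> real) \<Rightarrow> nat \<Rightarrow> nat \<Rightarrow> real" where
  "Mhat B Linv M i j = (\<Sum>k\<in>B. Linv i k * M k j)"

text \<open>The matrix N = (L^T Phi_B | Mhat_BN1 Phi_N1 | ... | Mhat_BNg Phi_Ng): rows indexed by B,
  columns indexed by pairs (D, c) with D \<in> {B} \<union> {N_1..N_g} and c < pi.\<close>
definition Nmat :: "nat set \<Rightarrow> (nat \<Rightarrow> nat \<Rightarrow> real) \<Rightarrow> (nat \<Rightarrow> nat \<Rightarrow> real) \<Rightarrow> (nat \<Rightarrow> nat \<Rightarrow> real)
    \<Rightarrow> (nat \<Rightarrow> nat \<Rightarrow> real) \<Rightarrow> nat \<Rightarrow> nat set \<times> nat \<Rightarrow> real" where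
  "Nmat B L Linv M Pi i Dc =
     (if fst Dc = B then (\<Sum>k\<in>B. L k i * Pi k (snd Dc))
      else (\<Sum>k\<in>fst Dc. Mhat B Linv M i k * Pi k (snd Dc)))"

definition Ncols :: "nat set set \<Rightarrow> nat set \<Rightarrow> (nat \<Rightarrow> nat \<Rightarrow> real) \<Rightarrow> nat \<Rightarrow> (nat set \<times> nat) set" where
  "Ncols P B M p = (insert B (nbr_blocks P B M)) \<times> {0..<p}"

text \<open>M_(+), as an n\<times>n matrix in which the rows/columns with index in B stand for the
  coordinates of Q (columns of Q indexed by B); K \<subseteq> B are the indices of the Q_1 columns,
  B - K those of the Q_2 columns; the remaining indices are the original N and W indices.\<close>
definition Mplus :: "nat set set \<Rightarrow> nat set \<Rightarrow> nat set \<Rightarrow> (nat \<Rightarrow> nat \<Rightarrow> real) \<Rightarrow> (nat \<Rightarrow> nat \<Rightarrow> real)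
    \<Rightarrow> (nat \<Rightarrow> nat \<Rightarrow> real) \<Rightarrow> nat \<Rightarrow> nat \<Rightarrow> real" where
  "Mplus P B K Linv M Q i j =
     (let N = nbr_set P B M in
      if i \<in> B \<and> j \<in> B then (if i = j then 1 else 0)
      else if i \<in> K \<and> j \<in> N then (\<Sum>k\<in>B. Q k i * Mhat B Linv M k j)
      else if i \<in> N \<and> j \<in> K then (\<Sum>k\<in>B. Mhat B Linv M k i * Q k j)
      else if i \<notin> B \<and> j \<notin> B then M i j
      else 0)"

definition Bcal :: "nat set \<Rightarrow> (nat \<Rightarrow> nat \<Rightarrow> real) \<Rightarrow> (nat \<Rightarrow> nat \<Rightarrow> real) \<Rightarrow> nat \<Rightarrow> nat \<Rightarrow> real" where
  "Bcal B L Q i j =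
     (if i \<in> B \<and> j \<in> B then (\<Sum>k\<in>B. L i k * Q k j)
      else if i \<notin> B \<and> j \<notin> B then (if i = j then 1 else 0)
      else 0)"

definition Mtilde :: "nat \<Rightarrow> nat set set \<Rightarrow> nat set \<Rightarrow> nat set \<Rightarrow> (nat \<Rightarrow> nat \<Rightarrow> real) \<Rightarrow> (nat \<Rightarrow> nat \<Rightarrow> real)
    \<Rightarrow> (nat \<Rightarrow> nat \<Rightarrow> real) \<Rightarrow> (nat \<Rightarrow> nat \<Rightarrow> real) \<Rightarrow> nat \<Rightarrow> nat \<Rightarrow> real" where
  "Mtilde n P B K L Linv M Q i j =
     (\<Sum>k<n. \<Sum>l<n. Bcal B L Q i k * Mplus P B K Linv M Q k l * Bcal B L Q j l)"

definition Pi_block :: "nat set \<Rightarrow> (nat \<Rightarrow> nat \<Rightarrow> real) \<Rightarrow> nat \<Rightarrow> nat \<Rightarrow> real" where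
  "Pi_block D Pi i j = (if i \<in> D then Pi i j else 0)"

end

theory Submission
  imports Defs
begin

text \<open>Conjugation by \<open>diag(L Q, I)\<close> turns \<open>Mplus\<close> into a matrix \<open>Mtilde\<close> that agrees with
  \<open>M\<close> except on the blocks \<open>B \<times> N\<close> and \<open>N \<times> B\<close>, where \<open>M\<^sub>B\<^sub>N = L Mhat\<^sub>B\<^sub>N\<close> is replaced by
  \<open>L E Mhat\<^sub>B\<^sub>N\<close>, with \<open>E = Q\<^sub>1 Q\<^sub>1\<^sup>T\<close> the orthogonal projector onto the range of the matrix \<open>N\<close>.
  Applying \<open>M\<close> or \<open>Mtilde\<close> to \<open>\<Pi>\<^sub>D\<close> only ever lets \<open>E\<close> act on a column of \<open>N\<close>
  (\<open>Mhat\<^sub>B\<^sub>N\<^sub>j \<Phi>\<^sub>N\<^sub>j\<close> directly, \<open>L\<^sup>T \<Phi>\<^sub>B\<close> through the symmetry of \<open>E\<close>), and \<open>E\<close> fixes those.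

  For definiteness write \<open>a = L\<^sup>T x\<^sub>B\<close>, \<open>h = Mhat\<^sub>B\<^sub>R x\<^sub>R\<close> and \<open>q = x\<^sub>R\<^sup>T M\<^sub>R\<^sub>R x\<^sub>R\<close>, where
  \<open>R = V - B\<close>. Then \<open>x\<^sup>T M x = |a + h|\<^sup>2 - |h|\<^sup>2 + q\<close> and \<open>x\<^sup>T Mtilde x = |a + E h|\<^sup>2 - |E h|\<^sup>2 + q\<close>.
  Since \<open>a\<close> ranges over all vectors, positivity of \<open>M\<close> at \<open>a = -h\<close> gives \<open>q > |h|\<^sup>2 \<ge> |E h|\<^sup>2\<close>
  whenever \<open>x\<^sub>R \<noteq> 0\<close>; if \<open>x\<^sub>R = 0\<close> the form reduces to \<open>|a|\<^sup>2 > 0\<close>.\<close>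

lemma sum_mult_delta:
  assumes "finite S" "a \<in> S"
  shows "(\<Sum>b\<in>S. f b * (if a = b then 1 else 0)) = (f a :: 'b::semiring_1)"
proof -
  have "(\<Sum>b\<in>S. f b * (if a = b then 1 else 0)) = (\<Sum>b\<in>S. if a = b then f b else 0)"
    by (rule sum.cong) auto
  then show ?thesis
    using assms by simp
qed

lemma sum_swap3:
  "(\<Sum>i\<in>A. \<Sum>j\<in>B. \<Sum>k\<in>C. f i j k) = (\<Sum>j\<in>B. \<Sum>k\<in>C. \<Sum>i\<in>A. (f i j k :: 'b::comm_monoid_add))"
  by (subst sum.swap) (rule sum.cong[OF refl], rule sum.swap)

lemma sum_right_inverse_cancel:
  assumes "finite B" "i \<in> B"
    and inv: "\<forall>i\<in>B. \<forall>j\<in>B. (\<Sum>k\<in>B. L i k * Linv k j) = (if i = j then 1 else 0)"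
  shows "(\<Sum>a\<in>B. L i a * (\<Sum>b\<in>B. Linv a b * f b)) = (f i :: 'b::comm_semiring_1)"
proof -
  have "(\<Sum>a\<in>B. L i a * (\<Sum>b\<in>B. Linv a b * f b)) = (\<Sum>b\<in>B. (\<Sum>a\<in>B. L i a * Linv a b) * f b)"
    unfolding sum_distrib_left sum_distrib_right by (subst sum.swap) (simp add: mult.assoc)
  also have "\<dots> = (\<Sum>b\<in>B. f b * (if i = b then 1 else 0))"
    using assms by (intro sum.cong) (simp_all add: mult.commute)
  also have "\<dots> = f i"
    by (rule sum_mult_delta[OF assms(1,2)])
  finally show ?thesis .
qed

definition col_proj :: "'a set \<Rightarrow> 'a set \<Rightarrow> ('a \<Rightarrow> 'a \<Rightarrow> real) \<Rightarrow> ('a \<Rightarrow> real) \<Rightarrow> 'a \<Rightarrow> real" where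
  "col_proj B K Q v a = (\<Sum>k\<in>K. Q a k * (\<Sum>m\<in>B. Q m k * v m))"

lemma col_proj_sum:
  "col_proj B K Q (\<lambda>m. \<Sum>j\<in>S. f m j * w j) a = (\<Sum>j\<in>S. col_proj B K Q (\<lambda>m. f m j) a * w j)"
  unfolding col_proj_def sum_distrib_left sum_distrib_right
  by (simp add: sum_swap3[of _ K] sum.swap[of _ B] ac_simps)

lemma col_proj_self_adjoint:
  "(\<Sum>a\<in>B. col_proj B K Q v a * u a) = (\<Sum>a\<in>B. v a * col_proj B K Q u a)"
proof -
  have pairing: "(\<Sum>a\<in>B. col_proj B K Q v a * u a) =
      (\<Sum>k\<in>K. (\<Sum>m\<in>B. Q m k * v m) * (\<Sum>a\<in>B. Q a k * u a))" for v u
    unfolding col_proj_def sum_distrib_left sum_distrib_right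
    by (rule trans[OF sum.swap]) (simp add: ac_simps)
  show ?thesis
    using pairing[of v u] pairing[of u v] by (simp add: mult.commute)
qed

lemma orthonormal_cols_sum_sq:
  fixes Q :: "'a \<Rightarrow> 'a \<Rightarrow> real"
  assumes "finite B" "S \<subseteq> B"
    and orth: "\<forall>k\<in>B. \<forall>l\<in>B. (\<Sum>i\<in>B. Q i k * Q i l) = (if k = l then 1 else 0)"
  shows "(\<Sum>m\<in>B. (\<Sum>k\<in>S. Q m k * f k)\<^sup>2) = (\<Sum>k\<in>S. (f k)\<^sup>2)"
proof -
  have finS: "finite S" using assms finite_subset by blast
  have orthS: "\<forall>k\<in>S. \<forall>l\<in>S. (\<Sum>i\<in>B. Q i k * Q i l) = (if k = l then 1 else 0)"
    using assms(2) orth by blast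
  have "(\<Sum>m\<in>B. (\<Sum>k\<in>S. Q m k * f k)\<^sup>2) = (\<Sum>m\<in>B. \<Sum>k\<in>S. \<Sum>l\<in>S. f k * f l * (Q m k * Q m l))"
    by (simp add: power2_eq_square sum_product ac_simps)
  also have "\<dots> = (\<Sum>k\<in>S. \<Sum>l\<in>S. \<Sum>m\<in>B. f k * f l * (Q m k * Q m l))"
    by (rule sum_swap3)
  also have "\<dots> = (\<Sum>k\<in>S. \<Sum>l\<in>S. f k * f l * (if k = l then 1 else 0))"
    using orthS by (intro sum.cong refl) (simp add: sum_distrib_left[symmetric])
  also have "\<dots> = (\<Sum>k\<in>S. (f k)\<^sup>2)"
    by (intro sum.cong refl) (simp add: sum_mult_delta[OF finS] power2_eq_square)
  finally show ?thesis .
qed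

lemma orthonormal_cols_coeffs:
  fixes Q :: "'a \<Rightarrow> 'a \<Rightarrow> real"
  assumes "finite B" "K \<subseteq> B" "k \<in> K"
    and orth: "\<forall>k\<in>B. \<forall>l\<in>B. (\<Sum>i\<in>B. Q i k * Q i l) = (if k = l then 1 else 0)"
  shows "(\<Sum>m\<in>B. Q m k * (\<Sum>l\<in>K. Q m l * y l)) = y k"
proof -
  have finK: "finite K" using assms finite_subset by blast
  have "(\<Sum>m\<in>B. Q m k * (\<Sum>l\<in>K. Q m l * y l)) = (\<Sum>l\<in>K. \<Sum>m\<in>B. y l * (Q m k * Q m l))"
    unfolding sum_distrib_left by (rule trans[OF sum.swap]) (simp add: ac_simps)
  also have "\<dots> = (\<Sum>l\<in>K. y l * (if k = l then 1 else 0))"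
    using assms(2,3) orth by (intro sum.cong refl) (simp add: sum_distrib_left[symmetric] subset_iff)
  also have "\<dots> = y k"
    by (rule sum_mult_delta[OF finK assms(3)])
  finally show ?thesis .
qed

lemma col_proj_in_range:
  assumes "finite B" "K \<subseteq> B"
    and orth: "\<forall>k\<in>B. \<forall>l\<in>B. (\<Sum>i\<in>B. Q i k * Q i l) = (if k = l then 1 else 0)"
    and "in_range B K Q v" "a \<in> B"
  shows "col_proj B K Q v a = v a"
proof -
  obtain y where y: "\<forall>m\<in>B. v m = (\<Sum>l\<in>K. Q m l * y l)"
    using assms(4) unfolding in_range_def by blast
  have "col_proj B K Q v a = (\<Sum>k\<in>K. Q a k * y k)"
    unfolding col_proj_def using orthonormal_cols_coeffs[OF assms(1,2) _ orth] y
    by (intro sum.cong refl) simp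
  then show ?thesis
    using y assms(5) by simp
qed

lemma col_proj_sum_sq_le:
  assumes "finite B" "K \<subseteq> B"
    and orth_cols: "\<forall>k\<in>B. \<forall>l\<in>B. (\<Sum>i\<in>B. Q i k * Q i l) = (if k = l then 1 else 0)"
    and orth_rows: "\<forall>i\<in>B. \<forall>j\<in>B. (\<Sum>k\<in>B. Q i k * Q j k) = (if i = j then 1 else 0)"
  shows "(\<Sum>a\<in>B. (col_proj B K Q v a)\<^sup>2) \<le> (\<Sum>a\<in>B. (v a)\<^sup>2)"
proof -
  define c where "c k = (\<Sum>m\<in>B. Q m k * v m)" for k
  have expand: "v a = (\<Sum>k\<in>B. Q a k * c k)" if "a \<in> B" for a
  proof -
    have "(\<Sum>k\<in>B. Q a k * c k) = (\<Sum>m\<in>B. \<Sum>k\<in>B. v m * (Q a k * Q m k))"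
      unfolding c_def sum_distrib_left by (rule trans[OF sum.swap]) (simp add: ac_simps)
    also have "\<dots> = (\<Sum>m\<in>B. v m * (if a = m then 1 else 0))"
      using that orth_rows by (intro sum.cong refl) (auto simp: sum_distrib_left[symmetric])
    also have "\<dots> = v a"
      by (rule sum_mult_delta[OF assms(1) that])
    finally show ?thesis by simp
  qed
  have "(\<Sum>a\<in>B. (col_proj B K Q v a)\<^sup>2) = (\<Sum>k\<in>K. (c k)\<^sup>2)"
    unfolding col_proj_def c_def[symmetric] by (rule orthonormal_cols_sum_sq[OF assms(1,2) orth_cols])
  also have "\<dots> \<le> (\<Sum>k\<in>B. (c k)\<^sup>2)"
    by (rule sum_mono2[OF assms(1,2)]) simp
  also have "\<dots> = (\<Sum>a\<in>B. (\<Sum>k\<in>B. Q a k * c k)\<^sup>2)"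
    by (rule orthonormal_cols_sum_sq[OF assms(1) order_refl orth_cols, symmetric])
  also have "\<dots> = (\<Sum>a\<in>B. (v a)\<^sup>2)"
    using expand by simp
  finally show ?thesis .
qed

lemma quad_form_split:
  fixes A :: "nat \<Rightarrow> nat \<Rightarrow> real"
  assumes "finite V" "B \<subseteq> V" and sym: "symmetric_on V A"
  shows "(\<Sum>i\<in>V. \<Sum>j\<in>V. x i * A i j * x j) =
     (\<Sum>i\<in>B. \<Sum>j\<in>B. x i * A i j * x j) + 2 * (\<Sum>i\<in>B. \<Sum>j\<in>V - B. x i * A i j * x j)
     + (\<Sum>i\<in>V - B. \<Sum>j\<in>V - B. x i * A i j * x j)"
proof -
  have split: "(\<Sum>i\<in>V. g i) = (\<Sum>i\<in>B. g i) + (\<Sum>i\<in>V - B. (g i :: real))" for g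
    using sum.subset_diff[OF assms(2,1)] by (simp add: add.commute)
  have "(\<Sum>i\<in>V - B. \<Sum>j\<in>B. x i * A i j * x j) = (\<Sum>j\<in>B. \<Sum>i\<in>V - B. x j * A j i * x i)"
    by (rule trans[OF sum.swap], intro sum.cong refl)
      (use assms(2) sym in \<open>auto simp: symmetric_on_def subset_iff\<close>)
  then show ?thesis
    by (simp add: split sum.distrib)
qed

locale block_modification =
  fixes n p :: nat
    and M Pi L Linv Q :: "nat \<Rightarrow> nat \<Rightarrow> real"
    and P :: "nat set set"
    and B K :: "nat set"
  assumes M_spd: "spd_on {0..<n} M"
    and part: "partition_of {0..<n} P"
    and B_in: "B \<in> P"
    and L_chol: "\<forall>i\<in>B. \<forall>j\<in>B. M i j = (\<Sum>k\<in>B. L i k * L j k)"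
    and Linv_r: "\<forall>i\<in>B. \<forall>j\<in>B. (\<Sum>k\<in>B. L i k * Linv k j) = (if i = j then 1 else 0)"
    and Linv_l: "\<forall>i\<in>B. \<forall>j\<in>B. (\<Sum>k\<in>B. Linv i k * L k j) = (if i = j then 1 else 0)"
    and K_sub: "K \<subseteq> B"
    and Q_orth_cols: "\<forall>k\<in>B. \<forall>l\<in>B. (\<Sum>i\<in>B. Q i k * Q i l) = (if k = l then 1 else 0)"
    and Q_orth_rows: "\<forall>i\<in>B. \<forall>j\<in>B. (\<Sum>k\<in>B. Q i k * Q j k) = (if i = j then 1 else 0)"
    and Q1_range: "\<forall>v. in_range B (Ncols P B M p) (Nmat B L Linv M Pi) v \<longleftrightarrow> in_range B K Q v"
begin

abbreviation "V \<equiv> {0..<n}"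
abbreviation "R \<equiv> V - B"
abbreviation "Nb \<equiv> nbr_set P B M"
abbreviation "Mh \<equiv> Mhat B Linv M"
abbreviation "Mp \<equiv> Mplus P B K Linv M Q"
abbreviation "Mt \<equiv> Mtilde n P B K L Linv M Q"

definition LQ :: "nat \<Rightarrow> nat \<Rightarrow> real" where
  "LQ i k = (\<Sum>m\<in>B. L i m * Q m k)"

text \<open>The block \<open>L Q\<^sub>1 Q\<^sub>1\<^sup>T Mhat\<^sub>B\<^sub>N\<close> of \<open>Mtilde\<close>, which takes the place of \<open>M\<^sub>B\<^sub>N = L Mhat\<^sub>B\<^sub>N\<close>.\<close>
definition coupling :: "nat \<Rightarrow> nat \<Rightarrow> real" where
  "coupling i j = (\<Sum>a\<in>B. L i a * col_proj B K Q (\<lambda>m. Mh m j) a)"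

lemma B_subset: "B \<subseteq> V"
  using part B_in unfolding partition_of_def by blast

lemma finite_B: "finite B"
  using B_subset finite_subset by blast

lemma nbr_set_disjoint: "Nb \<inter> B = {}"
  using part B_in unfolding partition_of_def nbr_set_def nbr_blocks_def by blast

lemma M_sym: "i \<in> V \<Longrightarrow> j \<in> V \<Longrightarrow> M i j = M j i"
  using M_spd unfolding spd_on_def symmetric_on_def by blast

lemma block_eq_if_common_elem:
  assumes "D \<in> P" "E \<in> P" "k \<in> D" "k \<in> E"
  shows "D = E"
  using part assms unfolding partition_of_def by blast

lemma M_outside_nbr_set:
  assumes "i \<in> B" "j \<in> V" "j \<notin> B" "j \<notin> Nb"
  shows "M i j = 0"
proof -
  obtain D where D: "D \<in> P" "j \<in> D"
    using part assms(2) unfolding partition_of_def by blast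
  then have "D \<noteq> B" "D \<notin> nbr_blocks P B M"
    using assms(3,4) unfolding nbr_set_def by blast+
  then show ?thesis
    using D assms(1) unfolding nbr_blocks_def by blast
qed

lemma coupling_outside_nbr_set:
  assumes "i \<in> B" "j \<in> V" "j \<notin> B" "j \<notin> Nb"
  shows "coupling i j = 0"
  using M_outside_nbr_set[OF _ assms(2-4)] by (simp add: coupling_def col_proj_def Mhat_def)

lemma LQ_LQ_eq_M:
  assumes "i \<in> B" "j \<in> B"
  shows "(\<Sum>k\<in>B. LQ i k * LQ j k) = M i j"
proof -
  have "(\<Sum>k\<in>B. LQ i k * LQ j k) = (\<Sum>a\<in>B. \<Sum>b\<in>B. \<Sum>k\<in>B. L i a * L j b * (Q a k * Q b k))"
    unfolding LQ_def sum_product by (rule trans[OF sum_swap3]) (simp add: ac_simps)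
  also have "\<dots> = (\<Sum>a\<in>B. \<Sum>b\<in>B. L i a * L j b * (if a = b then 1 else 0))"
    using Q_orth_rows by (intro sum.cong refl) (simp add: sum_distrib_left[symmetric] ac_simps)
  also have "\<dots> = (\<Sum>a\<in>B. L i a * L j a)"
    by (intro sum.cong refl) (rule sum_mult_delta[OF finite_B])
  finally show ?thesis
    using L_chol assms by simp
qed

lemma Bcal_sum:
  assumes "i \<in> V"
  shows "(\<Sum>k\<in>V. Bcal B L Q i k * f k) = (if i \<in> B then (\<Sum>k\<in>B. LQ i k * f k) else f i)"
proof -
  have "(\<Sum>k\<in>V. Bcal B L Q i k * f k) = (\<Sum>k\<in>B. Bcal B L Q i k * f k) + (\<Sum>k\<in>R. Bcal B L Q i k * f k)"
    using sum.subset_diff[OF B_subset] by (simp add: add.commute)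
  moreover have "(\<Sum>k\<in>R. Bcal B L Q i k * f k) = (if i \<in> B then 0 else f i)"
    using assms by (simp add: Bcal_def if_distrib[of "\<lambda>c. c * f _"] cong: if_cong)
  ultimately show ?thesis
    by (simp add: Bcal_def LQ_def)
qed

lemma Mplus_BB: "k \<in> B \<Longrightarrow> l \<in> B \<Longrightarrow> Mp k l = (if k = l then 1 else 0)"
  by (simp add: Mplus_def)

lemma Mplus_BR:
  "k \<in> B \<Longrightarrow> j \<notin> B \<Longrightarrow> Mp k j = (if k \<in> K \<and> j \<in> Nb then (\<Sum>m\<in>B. Q m k * Mh m j) else 0)"
  using nbr_set_disjoint K_sub by (auto simp: Mplus_def Let_def)

lemma Mplus_RB: "k \<in> B \<Longrightarrow> j \<notin> B \<Longrightarrow> Mp j k = Mp k j"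
  using nbr_set_disjoint K_sub by (auto simp: Mplus_def Let_def mult.commute)

lemma Mplus_RR: "i \<notin> B \<Longrightarrow> j \<notin> B \<Longrightarrow> Mp i j = M i j"
  using nbr_set_disjoint K_sub by (auto simp: Mplus_def Let_def)

lemma LQ_Mplus_eq_coupling:
  assumes "i \<in> B" "j \<in> V" "j \<notin> B"
  shows "(\<Sum>k\<in>B. LQ i k * Mp k j) = coupling i j"
proof (cases "j \<in> Nb")
  case True
  have K_eq: "{k. k \<in> B \<and> k \<in> K} = K"
    using K_sub by blast
  have "(\<Sum>k\<in>B. LQ i k * Mp k j) = (\<Sum>k\<in>K. LQ i k * (\<Sum>m\<in>B. Q m k * Mh m j))"
    using finite_B assms(3) True
    by (simp add: Mplus_BR if_distrib[of "\<lambda>c. _ * c"] sum.inter_filter[symmetric] K_eq cong: if_cong)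
  also have "\<dots> = coupling i j"
  proof -
    have "(\<Sum>k\<in>K. LQ i k * c k) = (\<Sum>a\<in>B. L i a * (\<Sum>k\<in>K. Q a k * c k))" for c
      unfolding LQ_def sum_distrib_left sum_distrib_right
      by (rule trans[OF sum.swap]) (simp add: ac_simps)
    then show ?thesis
      unfolding coupling_def col_proj_def .
  qed
  finally show ?thesis .
next
  case False
  then show ?thesis
    using coupling_outside_nbr_set[OF assms False] assms(3) by (simp add: Mplus_BR)
qed

lemma Mtilde_blocks:
  assumes "i \<in> V" "j \<in> V"
  shows "Mt i j = (if i \<in> B \<and> j \<in> B then M i j else if i \<in> B then coupling i j
                   else if j \<in> B then coupling j i else M i j)"
proof -
  have "Mt i j = (\<Sum>k\<in>V. Bcal B L Q i k * (\<Sum>l\<in>V. Bcal B L Q j l * Mp k l))"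
    unfolding Mtilde_def lessThan_atLeast0 by (simp add: sum_distrib_left ac_simps)
  also have "\<dots> = (if i \<in> B then \<Sum>k\<in>B. LQ i k * (if j \<in> B then \<Sum>l\<in>B. LQ j l * Mp k l else Mp k j)
                   else if j \<in> B then \<Sum>l\<in>B. LQ j l * Mp i l else Mp i j)"
    using assms by (simp add: Bcal_sum)
  also have "\<dots> = (if i \<in> B \<and> j \<in> B then M i j else if i \<in> B then coupling i j
                   else if j \<in> B then coupling j i else M i j)"
  proof -
    have "(\<Sum>l\<in>B. LQ j l * Mp k l) = LQ j k" if "k \<in> B" for k
      using that sum_mult_delta[OF finite_B that, of "LQ j"] by (simp add: Mplus_BB eq_commute)
    then show ?thesis
      using assms LQ_LQ_eq_M LQ_Mplus_eq_coupling Mplus_RB Mplus_RR by (simp cong: sum.cong)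
  qed
  finally show ?thesis .
qed

lemma Mtilde_sym: "i \<in> V \<Longrightarrow> j \<in> V \<Longrightarrow> Mt i j = Mt j i"
  using Mtilde_blocks[of i j] Mtilde_blocks[of j i] M_sym[of i j] by auto

lemma Mtilde_eq_M:
  assumes "i \<in> V" "j \<in> V" "\<not> (i \<in> B \<and> j \<in> Nb)" "\<not> (j \<in> B \<and> i \<in> Nb)"
  shows "Mt i j = M i j"
  using assms Mtilde_blocks[OF assms(1,2)] coupling_outside_nbr_set M_outside_nbr_set M_sym[OF assms(1,2)]
  by auto

lemma finite_partition: "finite P"
  using part finite_subset[of P "Pow V"] unfolding partition_of_def by blast

lemma Nmat_col_in_range:
  assumes "D \<in> insert B (nbr_blocks P B M)" "c < p"
  shows "in_range B K Q (\<lambda>i. Nmat B L Linv M Pi i (D, c))"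
proof -
  have fin: "finite (Ncols P B M p)"
    unfolding Ncols_def nbr_blocks_def using finite_partition by auto
  have mem: "(D, c) \<in> Ncols P B M p"
    unfolding Ncols_def using assms by auto
  have "in_range B (Ncols P B M p) (Nmat B L Linv M Pi) (\<lambda>i. Nmat B L Linv M Pi i (D, c))"
    unfolding in_range_def
    by (rule exI[of _ "\<lambda>j. if (D, c) = j then 1 else 0"]) (simp add: sum_mult_delta[OF fin mem])
  then show ?thesis
    using Q1_range by blast
qed

lemma coupling_apply_in_range:
  assumes "i \<in> B" and range: "in_range B K Q (\<lambda>m. \<Sum>j\<in>S. Mh m j * w j)"
  shows "(\<Sum>j\<in>S. coupling i j * w j) = (\<Sum>j\<in>S. M i j * w j)"
proof -
  have "(\<Sum>j\<in>S. coupling i j * w j) = (\<Sum>a\<in>B. L i a * col_proj B K Q (\<lambda>m. \<Sum>j\<in>S. Mh m j * w j) a)"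
    unfolding coupling_def col_proj_sum sum_distrib_left sum_distrib_right
    by (rule trans[OF sum.swap]) (simp add: ac_simps)
  also have "\<dots> = (\<Sum>a\<in>B. L i a * (\<Sum>b\<in>B. Linv a b * (\<Sum>j\<in>S. M b j * w j)))"
  proof (intro sum.cong refl)
    fix a assume "a \<in> B"
    have "(\<Sum>j\<in>S. Mh a j * w j) = (\<Sum>b\<in>B. Linv a b * (\<Sum>j\<in>S. M b j * w j))"
      unfolding Mhat_def sum_distrib_left sum_distrib_right
      by (rule trans[OF sum.swap]) (simp add: ac_simps)
    then show "L i a * col_proj B K Q (\<lambda>m. \<Sum>j\<in>S. Mh m j * w j) a =
        L i a * (\<Sum>b\<in>B. Linv a b * (\<Sum>j\<in>S. M b j * w j))"
      using col_proj_in_range[OF finite_B K_sub Q_orth_cols range \<open>a \<in> B\<close>] by simp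
  qed
  also have "\<dots> = (\<Sum>j\<in>S. M i j * w j)"
    by (rule sum_right_inverse_cancel[OF finite_B assms(1) Linv_r])
  finally show ?thesis .
qed

lemma coupling_transpose_apply_in_range:
  assumes "i \<in> V" and range: "in_range B K Q (\<lambda>a. \<Sum>j\<in>B. L j a * w j)"
  shows "(\<Sum>j\<in>B. coupling j i * w j) = (\<Sum>j\<in>B. M i j * w j)"
proof -
  define u where "u a = (\<Sum>j\<in>B. L j a * w j)" for a
  have "(\<Sum>j\<in>B. coupling j i * w j) = (\<Sum>a\<in>B. col_proj B K Q (\<lambda>m. Mh m i) a * u a)"
    unfolding coupling_def u_def sum_distrib_left sum_distrib_right
    by (rule trans[OF sum.swap]) (simp add: ac_simps)
  also have "\<dots> = (\<Sum>a\<in>B. Mh a i * u a)"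
    using col_proj_in_range[OF finite_B K_sub Q_orth_cols range[folded u_def]]
    by (simp add: col_proj_self_adjoint)
  also have "\<dots> = (\<Sum>j\<in>B. w j * (\<Sum>a\<in>B. L j a * (\<Sum>b\<in>B. Linv a b * M b i)))"
    unfolding u_def Mhat_def sum_distrib_left sum_distrib_right
    by (rule trans[OF sum.swap]) (simp add: ac_simps)
  also have "\<dots> = (\<Sum>j\<in>B. M i j * w j)"
  proof (intro sum.cong refl)
    fix j assume "j \<in> B"
    then have "(\<Sum>a\<in>B. L j a * (\<Sum>b\<in>B. Linv a b * M b i)) = M i j"
      using sum_right_inverse_cancel[OF finite_B _ Linv_r] M_sym assms(1) B_subset by auto
    then show "w j * (\<Sum>a\<in>B. L j a * (\<Sum>b\<in>B. Linv a b * M b i)) = M i j * w j"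
      by simp
  qed
  finally show ?thesis .
qed

lemma sum_Pi_block:
  assumes "D \<in> P"
  shows "(\<Sum>k<n. f k * Pi_block D Pi k c) = (\<Sum>k\<in>D. f k * Pi k c)"
proof -
  have "D \<subseteq> V"
    using part assms unfolding partition_of_def by blast
  then have "(\<Sum>k\<in>V. if k \<in> D then f k * Pi k c else 0) = (\<Sum>k\<in>D. f k * Pi k c)"
    by (simp add: sum.inter_restrict[symmetric] Int_absorb1)
  then show ?thesis
    unfolding lessThan_atLeast0 Pi_block_def
    by (simp add: if_distrib[of "\<lambda>c. _ * c"] cong: if_cong)
qed

lemma Mtilde_eq_M_on_block:
  assumes D: "D \<in> P" and "i \<in> V" "k \<in> D"
    and "\<not> (i \<in> B \<and> D \<in> nbr_blocks P B M)" "\<not> (i \<in> Nb \<and> D = B)"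
  shows "Mt i k = M i k"
proof (rule Mtilde_eq_M)
  show "\<not> (i \<in> B \<and> k \<in> Nb)"
    using assms block_eq_if_common_elem unfolding nbr_set_def nbr_blocks_def by blast
  show "\<not> (k \<in> B \<and> i \<in> Nb)"
    using assms B_in block_eq_if_common_elem by blast
  show "k \<in> V"
    using part assms(1,3) unfolding partition_of_def by blast
qed (rule assms(2))

lemma Mtilde_Pi_block_eq:
  assumes D: "D \<in> P" and "i < n" "c < p"
  shows "(\<Sum>k<n. M i k * Pi_block D Pi k c) = (\<Sum>k<n. Mt i k * Pi_block D Pi k c)"
proof -
  have DV: "D \<subseteq> V" and iV: "i \<in> V"
    using part D assms(2) unfolding partition_of_def by auto
  consider (nbr) "i \<in> B" "D \<in> nbr_blocks P B M" | (transposed) "i \<in> Nb" "D = B"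
    | (entrywise) "\<forall>k\<in>D. Mt i k = M i k"
    using Mtilde_eq_M_on_block[OF D iV] by blast
  then have "(\<Sum>k\<in>D. M i k * Pi k c) = (\<Sum>k\<in>D. Mt i k * Pi k c)"
  proof cases
    case nbr
    have "D \<inter> B = {}"
      using nbr(2) part B_in unfolding nbr_blocks_def partition_of_def by blast
    then have "(\<Sum>k\<in>D. Mt i k * Pi k c) = (\<Sum>k\<in>D. coupling i k * Pi k c)"
      using nbr(1) DV iV by (intro sum.cong refl) (subst Mtilde_blocks, auto)
    moreover have "in_range B K Q (\<lambda>m. \<Sum>k\<in>D. Mh m k * Pi k c)"
      using Nmat_col_in_range[of D c] nbr assms(3) B_in by (auto simp: Nmat_def nbr_blocks_def)
    ultimately show ?thesis
      using coupling_apply_in_range[OF nbr(1)] by simp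
  next
    case transposed
    have "i \<notin> B"
      using transposed(1) nbr_set_disjoint by blast
    then have "(\<Sum>k\<in>D. Mt i k * Pi k c) = (\<Sum>k\<in>B. coupling k i * Pi k c)"
      using B_subset iV unfolding transposed(2) by (intro sum.cong refl) (subst Mtilde_blocks, auto)
    moreover have "in_range B K Q (\<lambda>m. \<Sum>k\<in>B. L k m * Pi k c)"
      using Nmat_col_in_range[of B c] assms(3) by (simp add: Nmat_def)
    ultimately show ?thesis
      using coupling_transpose_apply_in_range[OF iV] transposed(2) by simp
  next
    case entrywise
    then show ?thesis
      by simp
  qed
  then show ?thesis
    by (simp add: sum_Pi_block[OF D])
qed

definition Lt_vec :: "(nat \<Rightarrow> real) \<Rightarrow> nat \<Rightarrow> real" where
  "Lt_vec x m = (\<Sum>i\<in>B. L i m * x i)"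

definition Mhat_vec :: "(nat \<Rightarrow> real) \<Rightarrow> nat \<Rightarrow> real" where
  "Mhat_vec x m = (\<Sum>j\<in>R. Mh m j * x j)"

lemma quad_form_BB: "(\<Sum>i\<in>B. \<Sum>j\<in>B. x i * M i j * x j) = (\<Sum>m\<in>B. (Lt_vec x m)\<^sup>2)"
proof -
  have "(\<Sum>i\<in>B. \<Sum>j\<in>B. x i * M i j * x j) = (\<Sum>i\<in>B. \<Sum>j\<in>B. \<Sum>m\<in>B. L i m * x i * (L j m * x j))"
    using L_chol by (intro sum.cong refl) (simp add: sum_distrib_left sum_distrib_right ac_simps)
  also have "\<dots> = (\<Sum>m\<in>B. \<Sum>i\<in>B. \<Sum>j\<in>B. L i m * x i * (L j m * x j))"
    by (rule sum_swap3[symmetric])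
  also have "\<dots> = (\<Sum>m\<in>B. (Lt_vec x m)\<^sup>2)"
    unfolding Lt_vec_def by (simp add: power2_eq_square sum_product)
  finally show ?thesis .
qed

lemma quad_form_cross:
  assumes "\<And>i. i \<in> B \<Longrightarrow> (\<Sum>j\<in>R. A i j * x j) = (\<Sum>a\<in>B. L i a * g a)"
  shows "(\<Sum>i\<in>B. \<Sum>j\<in>R. x i * A i j * x j) = (\<Sum>a\<in>B. Lt_vec x a * g a)"
proof -
  have "(\<Sum>i\<in>B. \<Sum>j\<in>R. x i * A i j * x j) = (\<Sum>i\<in>B. x i * (\<Sum>j\<in>R. A i j * x j))"
    by (simp add: sum_distrib_left mult.assoc)
  also have "\<dots> = (\<Sum>i\<in>B. x i * (\<Sum>a\<in>B. L i a * g a))"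
    using assms by simp
  also have "\<dots> = (\<Sum>a\<in>B. Lt_vec x a * g a)"
    unfolding Lt_vec_def sum_distrib_left sum_distrib_right
    by (rule trans[OF sum.swap]) (simp add: ac_simps)
  finally show ?thesis .
qed

lemma M_apply_R:
  assumes "i \<in> B"
  shows "(\<Sum>j\<in>R. M i j * x j) = (\<Sum>a\<in>B. L i a * Mhat_vec x a)"
proof -
  have "Mhat_vec x a = (\<Sum>b\<in>B. Linv a b * (\<Sum>j\<in>R. M b j * x j))" for a
    unfolding Mhat_vec_def Mhat_def sum_distrib_left sum_distrib_right
    by (rule trans[OF sum.swap]) (simp add: ac_simps)
  then show ?thesis
    using sum_right_inverse_cancel[OF finite_B assms Linv_r] by simp
qed

lemma coupling_apply_R:
  "(\<Sum>j\<in>R. coupling i j * x j) = (\<Sum>a\<in>B. L i a * col_proj B K Q (Mhat_vec x) a)"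
  unfolding coupling_def Mhat_vec_def col_proj_sum sum_distrib_left sum_distrib_right
  by (rule trans[OF sum.swap]) (simp add: ac_simps)

lemma quad_form_M:
  "(\<Sum>i\<in>V. \<Sum>j\<in>V. x i * M i j * x j) =
     (\<Sum>m\<in>B. (Lt_vec x m)\<^sup>2) + 2 * (\<Sum>m\<in>B. Lt_vec x m * Mhat_vec x m)
     + (\<Sum>i\<in>R. \<Sum>j\<in>R. x i * M i j * x j)"
  using quad_form_split[OF _ B_subset] M_spd quad_form_BB quad_form_cross[OF M_apply_R]
  unfolding spd_on_def by simp

lemma quad_form_Mtilde:
  "(\<Sum>i\<in>V. \<Sum>j\<in>V. x i * Mt i j * x j) =
     (\<Sum>m\<in>B. (Lt_vec x m)\<^sup>2) + 2 * (\<Sum>m\<in>B. Lt_vec x m * col_proj B K Q (Mhat_vec x) m)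
     + (\<Sum>i\<in>R. \<Sum>j\<in>R. x i * M i j * x j)"
proof -
  have "symmetric_on V Mt"
    unfolding symmetric_on_def using Mtilde_sym by blast
  moreover have "(\<Sum>i\<in>B. \<Sum>j\<in>B. x i * Mt i j * x j) = (\<Sum>i\<in>B. \<Sum>j\<in>B. x i * M i j * x j)"
    and "(\<Sum>i\<in>B. \<Sum>j\<in>R. x i * Mt i j * x j) = (\<Sum>i\<in>B. \<Sum>j\<in>R. x i * coupling i j * x j)"
    and "(\<Sum>i\<in>R. \<Sum>j\<in>R. x i * Mt i j * x j) = (\<Sum>i\<in>R. \<Sum>j\<in>R. x i * M i j * x j)"
    using B_subset by (intro sum.cong refl; subst Mtilde_blocks; auto)+
  ultimately show ?thesis
    using quad_form_split[OF _ B_subset, of Mt] quad_form_BB quad_form_cross[OF coupling_apply_R]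
    by simp
qed

lemma Lt_vec_solve:
  assumes "m \<in> B"
  shows "Lt_vec (\<lambda>i. if i \<in> B then \<Sum>b\<in>B. Linv b i * g b else x i) m = g m"
proof -
  have "Lt_vec (\<lambda>i. if i \<in> B then \<Sum>b\<in>B. Linv b i * g b else x i) m
      = (\<Sum>i\<in>B. L i m * (\<Sum>b\<in>B. Linv b i * g b))"
    unfolding Lt_vec_def by (intro sum.cong) auto
  also have "\<dots> = (\<Sum>b\<in>B. g b * (\<Sum>i\<in>B. Linv b i * L i m))"
    unfolding sum_distrib_left sum_distrib_right
    by (rule trans[OF sum.swap]) (simp add: ac_simps)
  also have "\<dots> = (\<Sum>b\<in>B. g b * (if m = b then 1 else 0))"
    using Linv_l assms by (intro sum.cong refl) auto
  also have "\<dots> = g m"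
    by (rule sum_mult_delta[OF finite_B assms])
  finally show ?thesis .
qed

lemma Lt_vec_eq_0_imp_eq_0:
  assumes "\<forall>m\<in>B. Lt_vec x m = 0" "i \<in> B"
  shows "x i = 0"
proof -
  have "(\<Sum>m\<in>B. Linv m i * Lt_vec x m) = (\<Sum>j\<in>B. x j * (\<Sum>m\<in>B. L j m * Linv m i))"
    unfolding Lt_vec_def sum_distrib_left sum_distrib_right
    by (rule trans[OF sum.swap]) (simp add: ac_simps)
  also have "\<dots> = (\<Sum>j\<in>B. x j * (if i = j then 1 else 0))"
    using Linv_r assms(2) by (intro sum.cong refl) auto
  also have "\<dots> = x i"
    by (rule sum_mult_delta[OF finite_B assms(2)])
  finally show ?thesis
    using assms(1) by simp
qed

lemma Mtilde_spd: "spd_on V Mt"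
  unfolding spd_on_def symmetric_on_def
proof (intro conjI allI impI ballI)
  fix i j
  assume "i \<in> V" "j \<in> V"
  then show "Mt i j = Mt j i"
    by (rule Mtilde_sym)
next
  fix x :: "nat \<Rightarrow> real"
  assume nonzero: "\<exists>i\<in>V. x i \<noteq> 0"
  define a where "a = Lt_vec x"
  define h where "h = Mhat_vec x"
  define q where "q = (\<Sum>i\<in>R. \<Sum>j\<in>R. x i * M i j * x j)"
  have quad: "(\<Sum>i\<in>V. \<Sum>j\<in>V. x i * Mt i j * x j) =
      (\<Sum>m\<in>B. (a m + col_proj B K Q h m)\<^sup>2) - (\<Sum>m\<in>B. (col_proj B K Q h m)\<^sup>2) + q"
    unfolding quad_form_Mtilde a_def h_def q_def
    by (simp add: power2_sum sum.distrib sum_distrib_left mult.assoc)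
  show "0 < (\<Sum>i\<in>V. \<Sum>j\<in>V. x i * Mt i j * x j)"
  proof (cases "\<exists>i\<in>R. x i \<noteq> 0")
    case True
    \<comment> \<open>\<open>y\<close> keeps \<open>x\<close> off \<open>B\<close> and solves \<open>L\<^sup>T y\<^sub>B = -h\<close>, minimising the quadratic form of \<open>M\<close> in \<open>y\<^sub>B\<close>.\<close>
    define y where "y i = (if i \<in> B then \<Sum>b\<in>B. Linv b i * - h b else x i)" for i
    have y_nonzero: "\<exists>i\<in>V. y i \<noteq> 0"
      using True by (auto simp: y_def)
    have "Mhat_vec y = h" "(\<Sum>i\<in>R. \<Sum>j\<in>R. y i * M i j * y j) = q"
      unfolding Mhat_vec_def h_def q_def y_def by (auto intro!: sum.cong)
    moreover have "Lt_vec y m = - h m" if "m \<in> B" for m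
      using Lt_vec_solve[OF that] unfolding y_def .
    ultimately have "(\<Sum>i\<in>V. \<Sum>j\<in>V. y i * M i j * y j) = q - (\<Sum>m\<in>B. (h m)\<^sup>2)"
      unfolding quad_form_M by (simp add: power2_eq_square sum_negf)
    moreover have "0 < (\<Sum>i\<in>V. \<Sum>j\<in>V. y i * M i j * y j)"
      using M_spd y_nonzero unfolding spd_on_def by blast
    moreover have "(\<Sum>m\<in>B. (col_proj B K Q h m)\<^sup>2) \<le> (\<Sum>m\<in>B. (h m)\<^sup>2)"
      by (rule col_proj_sum_sq_le[OF finite_B K_sub Q_orth_cols Q_orth_rows])
    moreover have "0 \<le> (\<Sum>m\<in>B. (a m + col_proj B K Q h m)\<^sup>2)"
      by (simp add: sum_nonneg)
    ultimately show ?thesis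
      unfolding quad by linarith
  next
    case False
    then have h0: "h = (\<lambda>m. 0)" and q0: "q = 0"
      unfolding h_def q_def Mhat_vec_def by auto
    obtain i where "i \<in> B" "x i \<noteq> 0"
      using nonzero False by auto
    then obtain m where "m \<in> B" "a m \<noteq> 0"
      using Lt_vec_eq_0_imp_eq_0 unfolding a_def by blast
    then have "0 < (\<Sum>m\<in>B. (a m)\<^sup>2)"
      by (intro sum_pos2[OF finite_B]) auto
    then show ?thesis
      unfolding quad h0 q0 by (simp add: col_proj_def)
  qed
qed

end

theorem lemma3p1:
  fixes n p :: nat
    and M Pi L Linv Q :: "nat \<Rightarrow> nat \<Rightarrow> real"
    and P :: "nat set set"
    and B K :: "nat set"
  assumes M_spd: "spd_on {0..<n} M"
    and part: "partition_of {0..<n} P"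
    and B_in: "B \<in> P"
    and L_chol: "\<forall>i\<in>B. \<forall>j\<in>B. M i j = (\<Sum>k\<in>B. L i k * L j k)"
    and L_lower: "\<forall>i\<in>B. \<forall>j\<in>B. i < j \<longrightarrow> L i j = 0"
    and L_diag: "\<forall>i\<in>B. L i i > 0"
    and Linv_r: "\<forall>i\<in>B. \<forall>j\<in>B. (\<Sum>k\<in>B. L i k * Linv k j) = (if i = j then 1 else 0)"
    and Linv_l: "\<forall>i\<in>B. \<forall>j\<in>B. (\<Sum>k\<in>B. Linv i k * L k j) = (if i = j then 1 else 0)"
    and K_sub: "K \<subseteq> B"
    and Q_orth_cols: "\<forall>k\<in>B. \<forall>l\<in>B. (\<Sum>i\<in>B. Q i k * Q i l) = (if k = l then 1 else 0)"
    and Q_orth_rows: "\<forall>i\<in>B. \<forall>j\<in>B. (\<Sum>k\<in>B. Q i k * Q j k) = (if i = j then 1 else 0)"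
    and Q1_range: "\<forall>v. in_range B (Ncols P B M p) (Nmat B L Linv M Pi) v \<longleftrightarrow> in_range B K Q v"
  shows "(\<forall>D\<in>P. \<forall>i<n. \<forall>c<p.
            (\<Sum>k<n. M i k * Pi_block D Pi k c)
          = (\<Sum>k<n. Mtilde n P B K L Linv M Q i k * Pi_block D Pi k c))
       \<and> spd_on {0..<n} (Mtilde n P B K L Linv M Q)"
proof -
  interpret block_modification n p M Pi L Linv Q P B K
    using assms by unfold_locales
  show ?thesis
    using Mtilde_Pi_block_eq Mtilde_spd by blast
qed

end
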